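(* Let $S$ be an idempotent $\omega$-continuous semiring, $\mathcal X$ a finite set of variables, and $\vec f=(f_x)_{x\in\mathcal X}$ a vector of polynomials over $S$ in $\mathcal X$ in which every monomial contains at least one variable. Let $M^{(0)}=\widehat{\vec f}$ and $M^{(n+1)}=\mathrm{eval}_{M^{(n)}}(M^{(n)})$. Then for every $n\in\mathbb N$ and every $x\in\mathcal X$, $$M^{(n)}_x\;=\;\bigoplus_{t\in T_x^{\le 2^n}}\llbracket \mathrm{yield}(t)\rrbracket$$ as functions $S^{\mathcal X}\to S$.
   Context: Semiring notions: a semiring $(S,\oplus,\odot,0,1)$; natural order $a\le a\oplus b$; $\omega$-continuous: naturally ordered, chains have suprema, countable sums $\bigoplus_{i}a_i:=\sup_i(a_0\oplus\cdots\oplus a_i)$ commute with $\odot$ on both sides and are invariant under partitioning of the index set; idempotent: $a\oplus a=a$. Monomials are words $a_1x_{i_1}\cdots a_lx_{i_l}a_{l+1}$ ($a_j\in S$, $x_{i_j}\in\mathcal X$), polynomials finite sums of monomials; they are interpreted as functions $S^{\mathcal X}\to S$, and functions $S^{\mathcal X}\to S$ (and vectors of them) form a semiring under pointwise operations. For a vector $\vec v=(v_y)_{y\in\mathcal X}$ of functions and a function $g$, $\mathrm{eval}_{\vec v}(g)(\vec c)=g(v_{y}(\vec c))_{y\in\mathcal X}$ (composition), applied componentwise to vectors. Linear completion: a substitution $\{x\mapsto g\}$ applied to a polynomial $h$ yields the set $h\{x\mapsto g\}$ of polynomials obtained by replacing exactly one occurrence of $x$ in $h$ by $g$. Linear polynomial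 substitutions for $x$ are $\{x\mapsto x\}$ or $\{x\mapsto g\}$ with $g\in f_x\sigma_y$ for some variable $y$ and linear polynomial substitution $\sigma_y$ for $y$ (mutual induction). $\widehat{\vec f}$ is the vector with components $\widehat{f_x}=\bigoplus_{\sigma_x}x\sigma_x$, where $x\{x\mapsto g\}=g$ and the sum ranges over all linear polynomial substitutions for $x$. Derivation trees: associate with $\vec f$ the context-free grammar $G_{\vec f}$ with non-terminals $\mathcal X$, terminals the semiring elements, and a production $y\to w(m)$ for each monomial $m$ of $f_y$, where $w(m)$ is $m$ read as a word over $S\cup\mathcal X$. A derivation tree from $x$ (variables allowed at leaves) is a finite ordered tree whose root is labeled $x$, each inner node is labeled by a variable $y$ with children labeled, left to right, by the symbols of $w(m)$ for a production $y\to w(m)$, and each leaf is labeled by a semiring element or a variable. $\mathrm{yield}(t)$ is the word of leaf labels read left to right, and $\llbracket w\rrbracket$ is the monomial obtained by reading concatenation as $\odot$. $T_x^{\le k}$ is the set of derivation trees from $x$ of dimension at most $k$, where dimension is: $0$ for a leaf; $\dim$ of the child if exactly one child; otherwise, with $t_1,t_2$ children of highest and second-highest dimension, $\dim(t_1)+1$ if $\dim(t_1)=\dim(t_2)$ and $\dim(t_1)$ if $\dim(t_1)>\dim(t_2)$. *)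

theory Defs
  imports Main "HOL-Library.Countable_Set"
begin

definition natord :: "'a::plus \<Rightarrow> 'a \<Rightarrow> bool" where
  "natord a b \<longleftrightarrow> (\<exists>c. a + c = b)"

definition is_sup :: "'a::plus set \<Rightarrow> 'a \<Rightarrow> bool" where
  "is_sup A u \<longleftrightarrow> (\<forall>a\<in>A. natord a u) \<and> (\<forall>v. (\<forall>a\<in>A. natord a v) \<longrightarrow> natord u v)"

definition csum :: "(nat \<Rightarrow> 'a::comm_monoid_add) \<Rightarrow> 'a" where
  "csum a = (THE u. is_sup (range (\<lambda>n. \<Sum>i\<le>n. a i)) u)"

definition ssum :: "('i \<Rightarrow> 'a::comm_monoid_add) \<Rightarrow> 'i set \<Rightarrow> 'a" where
  "ssum f A = (if finite A then sum f A else csum (\<lambda>n. f (from_nat_into A n)))"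

text \<open>The axioms of an omega-continuous semiring (the semiring laws come from the
  type class; zero_neq_one is deliberately not required), stated for the type 's.\<close>
definition omega_continuous :: "'s::{semiring_0,monoid_mult} itself \<Rightarrow> bool" where
  "omega_continuous _ \<longleftrightarrow>
     (\<forall>a b :: 's. natord a b \<longrightarrow> natord b a \<longrightarrow> a = b) \<and>
     (\<forall>s :: nat \<Rightarrow> 's. (\<forall>i. natord (s i) (s (Suc i))) \<longrightarrow> (\<exists>u. is_sup (range s) u)) \<and>
     (\<forall>(c::'s) a. c * csum a = csum (\<lambda>i. c * a i)) \<and>
     (\<forall>(c::'s) a. csum a * c = csum (\<lambda>i. a i * c)) \<and>
     (\<forall>(a :: nat \<Rightarrow> 's) (J :: nat set) (P :: nat \<Rightarrow> nat set).
        (\<forall>i\<in>J. \<forall>j\<in>J. i \<noteq> j \<longrightarrow> P i \<inter> P j = {}) \<longrightarrow> (\<Union>j\<in>J. P j) = UNIV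
        \<longrightarrow> csum a = ssum (\<lambda>j. ssum a (P j)) J)"

definition idempotent_semiring :: "'s::{semiring_0,monoid_mult} itself \<Rightarrow> bool" where
  "idempotent_semiring _ \<longleftrightarrow> (\<forall>a :: 's. a + a = a)"

datatype ('s, 'x) sym = Cst 's | Vr 'x

type_synonym ('s, 'x) mono = "('s, 'x) sym list"
type_synonym ('s, 'x) poly = "('s, 'x) mono set"

fun is_monomial :: "('s, 'x) mono \<Rightarrow> bool" where
  "is_monomial [Cst a] = True"
| "is_monomial (Cst a # Vr y # w) = is_monomial w"
| "is_monomial _ = False"

fun symval :: "('s::monoid_mult, 'x) sym \<Rightarrow> ('x \<Rightarrow> 's) \<Rightarrow> 's" where
  "symval (Cst a) c = a"
| "symval (Vr y) c = c y"

definition wval :: "('s::monoid_mult, 'x) mono \<Rightarrow> ('x \<Rightarrow> 's) \<Rightarrow> 's" where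
  "wval w c = foldr (\<lambda>s r. symval s c * r) w 1"

definition peval :: "('s::{monoid_mult,comm_monoid_add}, 'x) poly \<Rightarrow> ('x \<Rightarrow> 's) \<Rightarrow> 's" where
  "peval p c = (\<Sum>m\<in>p. wval m c)"

text \<open>h{y |-> g}: replace exactly one occurrence of y in h by g.\<close>
definition subst1 :: "('s, 'x) poly \<Rightarrow> 'x \<Rightarrow> ('s, 'x) poly \<Rightarrow> ('s, 'x) poly set" where
  "subst1 h y g = {(h - {m}) \<union> {u @ m' @ v | m'. m' \<in> g} | m u v. m \<in> h \<and> m = u @ Vr y # v}"

text \<open>lin_sub f x g: {x |-> g} is a linear polynomial substitution for x.\<close>
inductive lin_sub :: "('x \<Rightarrow> ('s, 'x) poly) \<Rightarrow> 'x \<Rightarrow> ('s, 'x) poly \<Rightarrow> bool" for f where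
  lin_id: "lin_sub f x {[Vr x]}"
| lin_step: "lin_sub f y g' \<Longrightarrow> g \<in> subst1 (f x) y g' \<Longrightarrow> lin_sub f x g"

definition lin_completion :: "('x \<Rightarrow> ('s::{monoid_mult,comm_monoid_add}, 'x) poly) \<Rightarrow> 'x \<Rightarrow> (('x \<Rightarrow> 's) \<Rightarrow> 's)" where
  "lin_completion f x = (\<lambda>c. ssum (\<lambda>g. peval g c) {g. lin_sub f x g})"

primrec Mseq :: "('x \<Rightarrow> ('s::{monoid_mult,comm_monoid_add}, 'x) poly) \<Rightarrow> nat \<Rightarrow> 'x \<Rightarrow> (('x \<Rightarrow> 's) \<Rightarrow> 's)" where
  "Mseq f 0 = lin_completion f"
| "Mseq f (Suc n) = (\<lambda>x c. Mseq f n x (\<lambda>y. Mseq f n y c))"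

datatype ('s, 'x) dtree = Leaf "('s, 'x) sym" | Node 'x "('s, 'x) dtree list"

fun label :: "('s, 'x) dtree \<Rightarrow> ('s, 'x) sym" where
  "label (Leaf s) = s"
| "label (Node y ts) = Vr y"

fun wf_tree :: "('x \<Rightarrow> ('s, 'x) poly) \<Rightarrow> ('s, 'x) dtree \<Rightarrow> bool" where
  "wf_tree f (Leaf s) = True"
| "wf_tree f (Node y ts) = (map label ts \<in> f y \<and> (\<forall>t\<in>set ts. wf_tree f t))"

definition dtrees :: "('x \<Rightarrow> ('s, 'x) poly) \<Rightarrow> 'x \<Rightarrow> ('s, 'x) dtree set" where
  "dtrees f x = {t. label t = Vr x \<and> wf_tree f t}"

fun yield :: "('s, 'x) dtree \<Rightarrow> ('s, 'x) sym list" where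
  "yield (Leaf s) = [s]"
| "yield (Node y ts) = concat (map yield ts)"

fun dim :: "('s, 'x) dtree \<Rightarrow> nat" where
  "dim (Leaf s) = 0"
| "dim (Node y ts) =
     (let ds = rev (sort (map dim ts)) in
      if ds = [] then 0
      else if length ds = 1 then ds ! 0
      else if ds ! 0 = ds ! 1 then ds ! 0 + 1 else ds ! 0)"

end

theory Submission
  imports Defs "HOL-Library.Multiset"
begin

text \<open>In an idempotent \<open>\<omega>\<close>-continuous semiring every countable set has a least upper bound
  for the natural order, countable sums are these suprema, and products distribute over them;
  by idempotency repeated summands do not matter. Both sides of the claim are therefore suprema
  of sets of values of words, and it suffices to compare the sets of words.

  For \<open>n = 0\<close>, a linear substitution for \<open>x\<close> corresponds to a derivation tree from \<open>x\<close> in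
  which every inner node has at most one inner child. Since every monomial contains a variable,
  every inner node has at least two children, so these are exactly the trees of dimension at
  most 1.

  For the step, evaluating \<open>Mseq f n\<close> at itself amounts to grafting trees of dimension at
  most \<open>k = 2\<^sup>n\<close> onto the variable leaves of a tree of dimension at most \<open>k\<close>. Grafting raises the
  dimension by at most \<open>k\<close>; conversely, cutting every maximal subtree of dimension at most \<open>k\<close>
  of a tree of dimension at most \<open>2k\<close> back to its root variable leaves a tree of dimension at
  most \<open>k\<close> onto which the cut subtrees graft back.\<close>

lemma count_mset_le_one_iff:
  "count (mset xs) a \<le> 1 \<longleftrightarrow> (\<forall>i<length xs. \<forall>j<length xs. xs!i = a \<longrightarrow> xs!j = a \<longrightarrow> i = j)"
proof -
  have "count (mset xs) a = card {i. i < length xs \<and> xs!i = a}"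
    by (simp add: count_mset count_list_eq_length_filter length_filter_conv_card eq_commute)
  then show ?thesis
    by (auto simp: card_le_Suc0_iff_eq)
qed

lemma top_two_le_iff:
  assumes "sorted_wrt (\<ge>) ds"
  shows "(if ds = [] then 0 else if length ds = 1 then ds!0
          else if ds!0 = ds!1 then ds!0 + 1 else ds!0) \<le> m
     \<longleftrightarrow> (\<forall>d\<in>set ds. d \<le> m) \<and> count (mset ds) (m::nat) \<le> 1"
proof (cases ds)
  case (Cons a r)
  show ?thesis
  proof (cases r)
    case (Cons b r')
    have "b \<le> a" and below_b: "\<forall>d\<in>set r'. d \<le> b"
      using assms \<open>ds = a # r\<close> Cons by auto
    have above_b: "count (mset r') d = 0" if "d > b" for d
      using below_b that by (auto simp: count_eq_zero_iff)
    have absent: "count (mset r') d = 0" if "d \<notin> set r'" for d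
      using that by (simp add: count_eq_zero_iff)
    show ?thesis using \<open>b \<le> a\<close> below_b above_b[of m] absent[of m] \<open>ds = a # r\<close> Cons
      by (cases "a = b"; cases "a = m"; cases "b = m") (auto simp: not_le absent)
  qed (use Cons in auto)
qed simp

lemma dim_Node_le:
  "dim (Node y ts) \<le> m \<longleftrightarrow> (\<forall>t\<in>set ts. dim t \<le> m) \<and>
     (\<forall>i<length ts. \<forall>j<length ts. dim (ts!i) = m \<longrightarrow> dim (ts!j) = m \<longrightarrow> i = j)"
proof -
  define ds where "ds = rev (sort (map dim ts))"
  have "sorted_wrt (\<ge>) ds" by (simp add: ds_def sorted_wrt_rev)
  moreover have "mset ds = mset (map dim ts)" and "set ds = dim ` set ts" by (auto simp: ds_def)
  ultimately show ?thesis
    using top_two_le_iff[of ds m] count_mset_le_one_iff[of "map dim ts" m]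
    by (simp add: ds_def[symmetric] Let_def)
qed

(* From here on dim_Node_le replaces the sort-based defining equation. *)
declare dim.simps(2) [simp del]

lemma dim_Node_le_mono:
  assumes len: "length ts' = length ts" and "mono g"
    and le: "\<And>i. i < length ts \<Longrightarrow> dim (ts'!i) \<le> g (dim (ts!i))"
    and strict: "\<And>d. d < dim (Node y ts) \<Longrightarrow> g d < g (dim (Node y ts))"
  shows "dim (Node z ts') \<le> g (dim (Node y ts))"
proof -
  let ?m = "dim (Node y ts)"
  have below: "\<forall>t\<in>set ts. dim t \<le> ?m"
    and unique: "\<forall>i<length ts. \<forall>j<length ts. dim (ts!i) = ?m \<longrightarrow> dim (ts!j) = ?m \<longrightarrow> i = j"
    using dim_Node_le[of y ts ?m] by simp_all
  have child_le: "dim (ts'!i) \<le> g ?m" if "i < length ts" for i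
    using le[OF that] monoD[OF \<open>mono g\<close>] below that by (meson le_trans nth_mem)
  have attains: "dim (ts!i) = ?m" if "i < length ts" "dim (ts'!i) = g ?m" for i
    using le[OF that(1)] strict[of "dim (ts!i)"] below that by (metis le_neq_implies_less not_le nth_mem)
  show ?thesis
    unfolding dim_Node_le using len child_le attains unique by (auto simp: in_set_conv_nth)
qed

lemma dim_Node_eq_0D: "dim (Node y ts) = 0 \<Longrightarrow> length ts \<le> 1"
proof -
  assume "dim (Node y ts) = 0"
  then have "\<forall>i<length ts. \<forall>j<length ts. i = j"
    using dim_Node_le[of y ts 0] by auto
  then show "length ts \<le> 1"
    using zero_neq_one by (metis not_le less_trans zero_less_one)
qed

section \<open>Grafting and pruning\<close>

definition dtrees_le :: "('x \<Rightarrow> ('s, 'x) poly) \<Rightarrow> nat \<Rightarrow> 'x \<Rightarrow> ('s, 'x) dtree set" where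
  "dtrees_le f k x = {t \<in> dtrees f x. dim t \<le> k}"

inductive graft :: "('x \<Rightarrow> ('s, 'x) dtree set) \<Rightarrow> ('s, 'x) dtree \<Rightarrow> ('s, 'x) dtree \<Rightarrow> bool"
  for T where
  graft_Cst: "graft T (Leaf (Cst a)) (Leaf (Cst a))"
| graft_Vr: "t \<in> T y \<Longrightarrow> graft T (Leaf (Vr y)) t"
| graft_Node: "list_all2 (graft T) ts ts' \<Longrightarrow> graft T (Node y ts) (Node y ts')"

inductive_simps graft_Leaf_iff: "graft T (Leaf s) t'"
inductive_simps graft_Node_iff: "graft T (Node y ts) t'"

lemma graft_wf_label_dim:
  assumes "graft T t t'" and "\<And>y. T y \<subseteq> dtrees_le f k y" and "wf_tree f t"
  shows "wf_tree f t' \<and> label t' = label t \<and> dim t' \<le> dim t + k"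
  using assms(1,3)
proof (induction rule: graft.induct)
  case (graft_Vr t y)
  then show ?case using assms(2) by (auto simp: dtrees_le_def dtrees_def)
next
  case (graft_Node ts ts' y)
  have len: "length ts' = length ts"
    using graft_Node.IH by (simp add: list_all2_lengthD)
  have IH: "wf_tree f (ts'!i) \<and> label (ts'!i) = label (ts!i) \<and> dim (ts'!i) \<le> dim (ts!i) + k"
    if "i < length ts" for i
    using graft_Node that by (auto simp: list_all2_conv_all_nth)
  have "dim (Node y ts') \<le> dim (Node y ts) + k"
    by (rule dim_Node_le_mono) (use len IH in \<open>auto simp: mono_def\<close>)
  moreover have "map label ts' = map label ts"
    using IH len by (simp add: list_eq_iff_nth_eq)
  ultimately show ?case
    using graft_Node.prems IH len by (auto simp: in_set_conv_nth)
qed simp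

fun prune :: "nat \<Rightarrow> ('s, 'x) dtree \<Rightarrow> ('s, 'x) dtree" where
  "prune k (Leaf s) = Leaf s"
| "prune k (Node y ts) = (if dim (Node y ts) \<le> k then Leaf (Vr y) else Node y (map (prune k) ts))"

lemma label_prune [simp]: "label (prune k t) = label t"
  by (cases t) auto

lemma wf_tree_prune: "wf_tree f t \<Longrightarrow> wf_tree f (prune k t)"
  by (induction t) (auto simp: comp_def)

lemma dim_prune: "dim (prune k t) \<le> dim t - k"
proof (induction t)
  case (Node y ts)
  show ?case
  proof (cases "dim (Node y ts) \<le> k")
    case False
    have "dim (Node y (map (prune k) ts)) \<le> dim (Node y ts) - k"
      by (rule dim_Node_le_mono) (use Node.IH False in \<open>auto simp: mono_def\<close>)
    then show ?thesis using False by simp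
  qed simp
qed simp

lemma graft_prune: "wf_tree f t \<Longrightarrow> graft (dtrees_le f k) (prune k t) t"
proof (induction t)
  case (Leaf s)
  then show ?case by (cases s) (auto intro: graft.intros simp: dtrees_le_def dtrees_def)
next
  case (Node y ts)
  then show ?case
    by (auto intro!: graft_Vr graft_Node simp: dtrees_le_def dtrees_def list_all2_conv_all_nth)
qed

lemma graft_dtrees_le:
  "{t'. \<exists>t\<in>dtrees_le f k x. graft (dtrees_le f k) t t'} = dtrees_le f (2 * k) x"
proof (intro equalityI subsetI)
  fix t' assume "t' \<in> {t'. \<exists>t\<in>dtrees_le f k x. graft (dtrees_le f k) t t'}"
  then obtain t where t: "t \<in> dtrees_le f k x" "graft (dtrees_le f k) t t'" by auto
  then show "t' \<in> dtrees_le f (2 * k) x"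
    using graft_wf_label_dim[OF t(2), of f k] by (auto simp: dtrees_le_def dtrees_def)
next
  fix t assume "t \<in> dtrees_le f (2 * k) x"
  then have "prune k t \<in> dtrees_le f k x" and "graft (dtrees_le f k) (prune k t) t"
    using dim_prune[of k t] wf_tree_prune[of f t] graft_prune[of f t k]
    by (auto simp: dtrees_le_def dtrees_def)
  then show "t \<in> {t'. \<exists>t\<in>dtrees_le f k x. graft (dtrees_le f k) t t'}" by blast
qed

section \<open>Linear substitutions as trees of dimension at most one\<close>

lemma yield_map_Leaf [simp]: "concat (map (yield \<circ> Leaf) u) = u"
  by (induction u) auto

lemma label_comp_Leaf [simp]: "label \<circ> Leaf = id"
  by auto

lemma map_Leaf_label: "\<forall>t\<in>set ts. \<exists>s. t = Leaf s \<Longrightarrow> ts = map Leaf (map label ts)"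
  by (induction ts) auto

lemma dim_Node_map_Leaf: "dim (Node x (map Leaf u)) \<le> 1"
  unfolding dim_Node_le by auto

lemma dim_Node_one_inner:
  assumes "dim t \<le> 1"
  shows "dim (Node x (map Leaf u @ t # map Leaf v)) \<le> 1"
proof -
  let ?ts = "map Leaf u @ t # map Leaf v"
  have "dim (?ts!i) = 0" if "i < length ?ts" "i \<noteq> length u" for i
    using that by (cases "i < length u") (auto simp: nth_append nth_Cons' split: if_splits)
  then have "i = length u" if "i < length ?ts" "dim (?ts!i) = 1" for i
    using that by (metis zero_neq_one)
  moreover have "\<forall>t'\<in>set ?ts. dim t' \<le> 1" using assms by auto
  ultimately show ?thesis
    unfolding dim_Node_le by metis
qed

lemma lin_sub_finite: "lin_sub f x g \<Longrightarrow> (\<And>y. finite (f y)) \<Longrightarrow> finite g"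
  by (induction rule: lin_sub.induct) (auto simp: subst1_def)

lemma lin_sub_subset_yield:
  "lin_sub f x g \<Longrightarrow> g \<subseteq> yield ` dtrees_le f 1 x"
proof (induction rule: lin_sub.induct)
  case (lin_id x)
  have "Leaf (Vr x) \<in> dtrees_le f 1 x" by (simp add: dtrees_le_def dtrees_def)
  then show ?case by force
next
  case (lin_step y g' g x)
  then obtain u v where g: "g = (f x - {u @ Vr y # v}) \<union> {u @ m' @ v | m'. m' \<in> g'}"
    and m: "u @ Vr y # v \<in> f x"
    by (auto simp: subst1_def)
  show ?case
  proof
    fix m0 assume "m0 \<in> g"
    then consider "m0 \<in> f x" | m' where "m' \<in> g'" "m0 = u @ m' @ v" using g by auto
    then show "m0 \<in> yield ` dtrees_le f 1 x"
    proof cases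
      case 1
      then have "Node x (map Leaf m0) \<in> dtrees_le f 1 x"
        using dim_Node_map_Leaf by (auto simp: dtrees_le_def dtrees_def)
      then show ?thesis by force
    next
      case 2
      then obtain t' where t': "t' \<in> dtrees_le f 1 y" "yield t' = m'" using lin_step.IH by blast
      then have "Node x (map Leaf u @ t' # map Leaf v) \<in> dtrees_le f 1 x"
        using m dim_Node_one_inner[of t' x u v] by (auto simp: dtrees_le_def dtrees_def)
      moreover have "yield (Node x (map Leaf u @ t' # map Leaf v)) = m0" using 2 t' by simp
      ultimately show ?thesis by force
    qed
  qed
qed

lemma dim_Node_le_one_cases:
  assumes dim: "dim (Node x ts) \<le> 1" and branching: "\<And>y us. Node y us \<in> set ts \<Longrightarrow> 2 \<le> length us"
  obtains (leaves) u where "ts = map Leaf u"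
  | (inner) u y us v where "ts = map Leaf u @ Node y us # map Leaf v" and "dim (Node y us) \<le> 1"
proof (cases "\<forall>t\<in>set ts. \<exists>s. t = Leaf s")
  case True
  then show ?thesis using leaves map_Leaf_label by blast
next
  case False
  have below: "\<forall>t\<in>set ts. dim t \<le> 1"
    and unique: "\<forall>i<length ts. \<forall>j<length ts. dim (ts!i) = 1 \<longrightarrow> dim (ts!j) = 1 \<longrightarrow> i = j"
    using dim dim_Node_le[of x ts 1] by simp_all
  have inner_dim: "dim (ts!i) = 1" if "i < length ts" "ts!i = Node y us" for i y us
  proof -
    have "2 \<le> length us" using branching[of y us] that nth_mem by metis
    then have "dim (ts!i) \<noteq> 0" using dim_Node_eq_0D[of y us] that(2) by auto
    then show ?thesis using below nth_mem[OF that(1)] by (auto simp: le_Suc_eq)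
  qed
  from False obtain i y us where i: "i < length ts" "ts!i = Node y us"
    by (metis in_set_conv_nth dtree.exhaust)
  have others: "\<exists>s. ts!j = Leaf s" if "j < length ts" "j \<noteq> i" for j
    using inner_dim unique i that by (metis dtree.exhaust)
  have "\<forall>t\<in>set (take i ts). \<exists>s. t = Leaf s" and "\<forall>t\<in>set (drop (Suc i) ts). \<exists>s. t = Leaf s"
    using others by (auto simp: in_set_conv_nth)
  then obtain u v where "take i ts = map Leaf u" and "drop (Suc i) ts = map Leaf v"
    using map_Leaf_label by metis
  moreover have "ts = take i ts @ Node y us # drop (Suc i) ts" by (metis id_take_nth_drop i)
  ultimately have "ts = map Leaf u @ Node y us # map Leaf v" by metis
  moreover have "dim (Node y us) \<le> 1" using below i nth_mem by metis
  ultimately show ?thesis using inner by blast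
qed

lemma dtrees_le_one_lin_sub:
  assumes branching: "\<And>y m. m \<in> f y \<Longrightarrow> 2 \<le> length m"
    and var: "\<And>y m. m \<in> f y \<Longrightarrow> \<exists>z. Vr z \<in> set m"
  shows "wf_tree f t \<Longrightarrow> dim t \<le> 1 \<Longrightarrow> label t = Vr x \<Longrightarrow> \<exists>g. lin_sub f x g \<and> yield t \<in> g"
proof (induction t arbitrary: x)
  case (Leaf s)
  then show ?case by (auto intro: lin_id)
next
  case (Node z ts)
  have fx: "map label ts \<in> f x" using Node.prems by simp
  have subst: "\<exists>g. lin_sub f x g \<and> u @ m' @ v \<in> g"
    if "u @ Vr y # v \<in> f x" "lin_sub f y g'" "m' \<in> g'" for u y v g' m'
  proof -
    let ?g = "(f x - {u @ Vr y # v}) \<union> {u @ m'' @ v | m''. m'' \<in> g'}"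
    have "?g \<in> subst1 (f x) y g'" using that(1) by (auto simp: subst1_def)
    then show ?thesis using lin_step[OF that(2)] that(3) by blast
  qed
  have branching_ts: "2 \<le> length us" if "Node y us \<in> set ts" for y us
    using Node.prems(1) that branching by (metis length_map wf_tree.simps(2))
  consider (leaves) u where "ts = map Leaf u"
    | (inner) u y us v where "ts = map Leaf u @ Node y us # map Leaf v" "dim (Node y us) \<le> 1"
    using dim_Node_le_one_cases[OF Node.prems(2)] branching_ts by blast
  then show ?case
  proof cases
    case (leaves u)
    obtain y u' v' where "u = u' @ Vr y # v'"
      using var[OF fx] leaves by (auto dest: split_list)
    then show ?thesis using subst[of u' y v' "{[Vr y]}" "[Vr y]"] lin_id[of f y] leaves fx by auto
  next
    case (inner u y us v)
    obtain g' where "lin_sub f y g'" "yield (Node y us) \<in> g'"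
      using Node.IH[of "Node y us" y] inner Node.prems(1) by auto
    then show ?thesis using subst[of u y v g'] inner fx by auto
  qed
qed

lemma Union_lin_sub:
  assumes "\<And>y m. m \<in> f y \<Longrightarrow> 2 \<le> length m" and "\<And>y m. m \<in> f y \<Longrightarrow> \<exists>z. Vr z \<in> set m"
  shows "\<Union>{g. lin_sub f x g} = yield ` dtrees_le f 1 x"
proof (intro equalityI subsetI)
  fix m assume "m \<in> \<Union>{g. lin_sub f x g}"
  then obtain g where "lin_sub f x g" "m \<in> g" by auto
  then show "m \<in> yield ` dtrees_le f 1 x" using lin_sub_subset_yield[of f x g] by auto
next
  fix m assume "m \<in> yield ` dtrees_le f 1 x"
  then obtain t where "t \<in> dtrees_le f 1 x" "m = yield t" by blast
  then show "m \<in> \<Union>{g. lin_sub f x g}"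
    using dtrees_le_one_lin_sub[OF assms] by (fastforce simp: dtrees_le_def dtrees_def)
qed

lemma is_monomial_length: "is_monomial m \<Longrightarrow> Vr y \<in> set m \<Longrightarrow> 2 \<le> length m"
  by (cases m rule: is_monomial.cases) auto

instance sym :: (countable, countable) countable by countable_datatype
instance dtree :: (countable, countable) countable by countable_datatype

definition consts_of :: "('x \<Rightarrow> ('s, 'x) poly) \<Rightarrow> 's set" where
  "consts_of f = {a. \<exists>x m. m \<in> f x \<and> Cst a \<in> set m}"

lemma countable_consts_of:
  fixes f :: "'x::countable \<Rightarrow> ('s, 'x) poly"
  assumes "\<And>x. finite (f x)"
  shows "countable (consts_of f)"
proof -
  have "consts_of f = (\<Union>x. \<Union>m\<in>f x. Cst -` set m)" by (auto simp: consts_of_def)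
  moreover have "finite (Cst -` set m)" for m :: "('s, 'x) mono"
    by (rule finite_vimageI) (auto simp: inj_def)
  ultimately show ?thesis using assms by (simp add: countable_finite)
qed

lemma wf_tree_set1_dtree:
  "wf_tree f t \<Longrightarrow> set1_dtree t \<subseteq> consts_of f \<union> set1_sym (label t)"
proof (induction t)
  case (Node y ts)
  have "a \<in> consts_of f" if "t \<in> set ts" "a \<in> set1_dtree t" for t a
  proof -
    have "a \<in> consts_of f \<union> set1_sym (label t)" using Node that by auto
    moreover have "label t \<in> set (map label ts)" and "map label ts \<in> f y"
      using Node.prems that by auto
    ultimately show ?thesis by (cases "label t") (fastforce simp: consts_of_def)+
  qed
  then show ?case by auto
qed simp

lemma countable_dtrees_over:
  assumes "countable K"
  shows "countable {t :: ('s, 'x::countable) dtree. set1_dtree t \<subseteq> K}"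
proof -
  let ?h = "map_dtree (to_nat_on K) id :: ('s, 'x) dtree \<Rightarrow> (nat, 'x) dtree"
  have "inj_on ?h {t. set1_dtree t \<subseteq> K}"
  proof (rule inj_on_inverseI)
    fix t :: "('s, 'x) dtree" assume "t \<in> {t. set1_dtree t \<subseteq> K}"
    then have "map_dtree (from_nat_into K \<circ> to_nat_on K) (id \<circ> id) t = map_dtree id id t"
      using assms by (intro dtree.map_cong0) auto
    then show "map_dtree (from_nat_into K) id (?h t) = t"
      by (simp add: dtree.map_comp dtree.map_id)
  qed
  then show ?thesis by (rule countable_image_inj_on[rotated]) simp
qed

lemma countable_dtrees:
  fixes f :: "'x::countable \<Rightarrow> ('s, 'x) poly"
  assumes "\<And>x. finite (f x)"
  shows "countable (dtrees f x)"
proof (rule countable_subset)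
  show "dtrees f x \<subseteq> {t. set1_dtree t \<subseteq> consts_of f}"
    using wf_tree_set1_dtree by (fastforce simp: dtrees_def)
qed (rule countable_dtrees_over[OF countable_consts_of[OF assms]])

lemma lin_sub_symbols:
  "lin_sub f x g \<Longrightarrow> m \<in> g \<Longrightarrow> set m \<subseteq> Cst ` consts_of f \<union> range Vr"
proof (induction arbitrary: m rule: lin_sub.induct)
  case (lin_step y g' g x)
  have f_symbols: "set m0 \<subseteq> Cst ` consts_of f \<union> range Vr" if "m0 \<in> f z" for m0 z
  proof
    fix s assume "s \<in> set m0"
    with that show "s \<in> Cst ` consts_of f \<union> range Vr"
      by (cases s) (auto simp: consts_of_def)
  qed
  from lin_step.hyps obtain u v where g: "g = (f x - {u @ Vr y # v}) \<union> {u @ m' @ v | m'. m' \<in> g'}"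
    and "u @ Vr y # v \<in> f x"
    by (auto simp: subst1_def)
  from lin_step.prems g consider "m \<in> f x" | m' where "m' \<in> g'" "m = u @ m' @ v" by auto
  then show ?case
  proof cases
    case 2
    then show ?thesis using lin_step.IH f_symbols[OF \<open>u @ Vr y # v \<in> f x\<close>] by simp
  qed (rule f_symbols)
qed simp

lemma countable_lin_sub:
  fixes f :: "'x::countable \<Rightarrow> ('s, 'x) poly"
  assumes "\<And>x. finite (f x)"
  shows "countable {g. lin_sub f x g}"
proof (rule countable_subset)
  show "{g. lin_sub f x g} \<subseteq> {A. finite A \<and> A \<subseteq> lists (Cst ` consts_of f \<union> range Vr)}"
  proof (rule subsetI, intro CollectI conjI)
    fix g assume "g \<in> {g. lin_sub f x g}"
    then have "lin_sub f x g" by simp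
    then show "finite g" using assms by (rule lin_sub_finite)
    show "g \<subseteq> lists (Cst ` consts_of f \<union> range Vr)"
      using lin_sub_symbols[OF \<open>lin_sub f x g\<close>] by auto
  qed
  show "countable {A. finite A \<and> A \<subseteq> lists (Cst ` consts_of f \<union> range (Vr :: 'x \<Rightarrow> ('s, 'x) sym))}"
    using countable_consts_of[OF assms]
    by (intro countable_Collect_finite_subset countable_lists) auto
qed

lemma Collect_list_all2_Cons:
  "{ts'. list_all2 R (t # ts) ts'} = (\<lambda>(a, b). a # b) ` ({t'. R t t'} \<times> {ts'. list_all2 R ts ts'})"
  by (auto simp: list_all2_Cons1)

lemma countable_list_all2:
  "(\<And>t. t \<in> set ts \<Longrightarrow> countable {t'. R t t'}) \<Longrightarrow> countable {ts'. list_all2 R ts ts'}"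
proof (induction ts)
  case Nil
  have "{ts'. list_all2 R [] ts'} = {[]}" by auto
  then show ?case by simp
qed (simp add: Collect_list_all2_Cons)

lemma countable_graft:
  assumes "\<And>y. countable (T y)"
  shows "countable {t'. graft T t t'}"
proof (induction t)
  case (Leaf s)
  then show ?case using assms by (cases s) (simp_all add: graft_Leaf_iff)
next
  case (Node y ts)
  have "{t'. graft T (Node y ts) t'} = Node y ` {ts'. list_all2 (graft T) ts ts'}"
    by (auto simp: graft_Node_iff)
  then show ?case using Node.IH countable_list_all2 by (metis countable_image)
qed

lemma wval_Nil [simp]: "wval [] c = 1"
  by (simp add: wval_def)

lemma wval_Cons [simp]: "wval (s # w) c = symval s c * wval w c"
  by (simp add: wval_def)

lemma wval_append: "wval (u @ v) c = wval u c * wval v c"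
  by (induction u) (simp_all add: mult.assoc)

lemma wval_concat: "wval (concat ws) c = prod_list (map (\<lambda>w. wval w c) ws)"
  by (induction ws) (simp_all add: wval_append)

section \<open>Suprema in idempotent \<open>\<omega>\<close>-continuous semirings\<close>

definition lub :: "'a::plus set \<Rightarrow> 'a" where
  "lub A = (THE u. is_sup A u)"

lemma natord_trans: "natord (a::'a::semigroup_add) b \<Longrightarrow> natord b c \<Longrightarrow> natord a c"
  unfolding natord_def by (metis add.assoc)

context
  assumes omega_continuous: "omega_continuous TYPE('s::{semiring_0,monoid_mult})"
    and idempotent: "idempotent_semiring TYPE('s)"
begin

lemma add_idem: "(a::'s) + a = a"
  using idempotent by (simp add: idempotent_semiring_def)

lemma chain_has_sup: "(\<And>i. natord (s i) (s (Suc i))) \<Longrightarrow> \<exists>u::'s. is_sup (range s) u"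
  using omega_continuous unfolding omega_continuous_def by (elim conjE) blast

lemma mult_csum: "(c::'s) * csum a = csum (\<lambda>i. c * a i)"
  using omega_continuous unfolding omega_continuous_def by (elim conjE) simp

lemma csum_mult: "csum a * (c::'s) = csum (\<lambda>i. a i * c)"
  using omega_continuous unfolding omega_continuous_def by (elim conjE) simp

lemma natord_iff_add_eq: "natord (a::'s) b \<longleftrightarrow> a + b = b"
proof
  assume "natord a b"
  then obtain c where "a + c = b" by (auto simp: natord_def)
  then show "a + b = b" by (metis add.assoc add_idem)
qed (auto simp: natord_def)

lemma natord_add_iff: "natord (a + b) (v::'s) \<longleftrightarrow> natord a v \<and> natord b v"
  unfolding natord_iff_add_eq by (metis add.assoc add.left_commute add_idem)

lemma natord_add_left: "natord (a::'s) (a + b)"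
  by (auto simp: natord_def)

lemma natord_add_right: "natord (b::'s) (a + b)"
  by (metis add.commute natord_add_left)

lemma is_sup_unique: "is_sup A (u::'s) \<Longrightarrow> is_sup A v \<Longrightarrow> u = v"
  unfolding is_sup_def natord_iff_add_eq by (metis add.commute)

lemma lub_eqI: "is_sup A (u::'s) \<Longrightarrow> lub A = u"
  unfolding lub_def by (blast intro: is_sup_unique)

lemma is_sup_sum: "finite I \<Longrightarrow> is_sup (g ` I) (sum g I :: 's)"
proof (induction rule: finite_induct)
  case empty
  then show ?case by (simp add: is_sup_def natord_def)
next
  case (insert i F)
  then have "natord a (g i + sum g F)" if "a \<in> g ` F" for a
    unfolding is_sup_def using that natord_add_right natord_trans by blast
  then show ?case
    using insert unfolding is_sup_def by (auto simp: natord_add_iff natord_add_left)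
qed

lemma is_sup_csum: "is_sup (range e) (csum e :: 's)"
proof -
  define p where "p n = (\<Sum>i\<le>n. e i)" for n
  have "natord (p n) (p (Suc n))" for n by (simp add: p_def natord_add_left)
  then obtain u where u: "is_sup (range p) u"
    using chain_has_sup by blast
  have "csum e = u"
    unfolding csum_def p_def[symmetric] using u by (blast intro: is_sup_unique)
  moreover have partial: "is_sup (e ` {..n}) (p n)" for n
    unfolding p_def by (rule is_sup_sum) simp
  moreover have "natord (e n) u" for n
    using partial[of n] u unfolding is_sup_def by (blast intro: natord_trans)
  moreover have "natord u v" if "\<forall>a\<in>range e. natord a v" for v
    using partial u that unfolding is_sup_def by blast
  ultimately show ?thesis unfolding is_sup_def by blast
qed

lemma is_sup_ssum: "countable I \<Longrightarrow> is_sup (g ` I) (ssum g I :: 's)"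
proof (cases "finite I")
  case False
  assume "countable I"
  then have "range (\<lambda>n. g (from_nat_into I n)) = g ` I"
    using False range_from_nat_into[of I] by (metis image_image infinite_imp_nonempty)
  then show ?thesis using False is_sup_csum by (metis ssum_def)
qed (simp add: ssum_def is_sup_sum)

lemma ssum_eq_lub: "countable I \<Longrightarrow> ssum g I = lub (g ` I :: 's set)"
  using is_sup_ssum lub_eqI by metis

lemma is_sup_lub: "countable (A::'s set) \<Longrightarrow> is_sup A (lub A)"
  using is_sup_ssum[of A id] lub_eqI by simp

lemma lub_singleton: "lub {a::'s} = a"
  by (rule lub_eqI) (simp add: is_sup_def natord_iff_add_eq add_idem)

lemma lub_UN:
  assumes I: "countable I" and B: "\<And>i. i \<in> I \<Longrightarrow> countable (B i :: 's set)"
  shows "lub (\<Union>i\<in>I. B i) = lub ((\<lambda>i. lub (B i)) ` I)"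
proof (rule lub_eqI)
  let ?u = "lub ((\<lambda>i. lub (B i)) ` I)"
  have outer: "is_sup ((\<lambda>i. lub (B i)) ` I) ?u" using I by (simp add: is_sup_lub)
  have inner: "is_sup (B i) (lub (B i))" if "i \<in> I" for i using B[OF that] by (rule is_sup_lub)
  show "is_sup (\<Union>i\<in>I. B i) ?u"
    unfolding is_sup_def
  proof (intro conjI ballI allI impI)
    fix a assume "a \<in> (\<Union>i\<in>I. B i)"
    then obtain i where i: "i \<in> I" "a \<in> B i" by blast
    then have "natord a (lub (B i))" using inner by (auto simp: is_sup_def)
    moreover have "natord (lub (B i)) ?u" using outer i by (auto simp: is_sup_def)
    ultimately show "natord a ?u" by (rule natord_trans)
  next
    fix v assume v: "\<forall>a\<in>(\<Union>i\<in>I. B i). natord a v"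
    have "natord (lub (B i)) v" if "i \<in> I" for i using inner[OF that] v that by (auto simp: is_sup_def)
    then show "natord ?u v" using outer by (auto simp: is_sup_def)
  qed
qed

lemma mult_ssum: "(c::'s) * ssum g I = ssum (\<lambda>i. c * g i) I"
  by (simp add: ssum_def sum_distrib_left mult_csum)

lemma ssum_mult: "ssum g I * (c::'s) = ssum (\<lambda>i. g i * c) I"
  by (simp add: ssum_def sum_distrib_right csum_mult)

lemma lub_mult_lub:
  assumes X: "countable (X::'s set)" and Y: "countable Y"
  shows "lub X * lub Y = lub ((\<lambda>(x, y). x * y) ` (X \<times> Y))"
proof -
  have "lub X * lub Y = lub ((\<lambda>x. x * lub Y) ` X)"
    using ssum_mult[of id X "lub Y"] ssum_eq_lub[OF X] by simp
  also have "\<dots> = lub ((\<lambda>x. lub ((*) x ` Y)) ` X)"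
    using mult_ssum[of _ id Y] ssum_eq_lub[OF Y] by simp
  also have "\<dots> = lub (\<Union>x\<in>X. (*) x ` Y)"
    by (rule lub_UN[symmetric]) (use X Y in auto)
  also have "(\<Union>x\<in>X. (*) x ` Y) = (\<lambda>(x, y). x * y) ` (X \<times> Y)" by auto
  finally show ?thesis .
qed

lemma prod_list_lub:
  assumes "\<And>t. t \<in> set ts \<Longrightarrow> countable {t'. R t t'}"
  shows "prod_list (map (\<lambda>t. lub (h ` {t'. R t t'})) ts)
    = lub ((\<lambda>ts'. prod_list (map h ts') :: 's) ` {ts'. list_all2 R ts ts'})"
  using assms
proof (induction ts)
  case Nil
  have "{ts'. list_all2 R [] ts'} = {[]}" by auto
  then show ?case by (simp add: lub_singleton)
next
  case (Cons t ts)
  let ?A = "h ` {t'. R t t'}" and ?B = "(\<lambda>ts'. prod_list (map h ts')) ` {ts'. list_all2 R ts ts'}"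
  have "countable ?A" and "countable ?B"
    using Cons.prems countable_list_all2[of ts R] by auto
  moreover have "(\<lambda>ts'. prod_list (map h ts')) ` {ts'. list_all2 R (t # ts) ts'}
      = (\<lambda>(x, y). x * y) ` (?A \<times> ?B)"
    unfolding Collect_list_all2_Cons by force
  ultimately show ?case using Cons by (simp add: lub_mult_lub)
qed

lemma wval_graft:
  assumes "\<And>y. countable (T y)"
  shows "wval (yield t) (\<lambda>y. lub ((\<lambda>s. wval (yield s) c) ` T y))
    = lub ((\<lambda>t'. wval (yield t') c :: 's) ` {t'. graft T t t'})"
proof (induction t)
  case (Leaf s)
  then show ?case by (cases s) (simp_all add: graft_Leaf_iff lub_singleton)
next
  case (Node y ts)
  let ?c' = "\<lambda>y. lub ((\<lambda>s. wval (yield s) c) ` T y)" and ?val = "\<lambda>t'. wval (yield t') c"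
  have "wval (yield (Node y ts)) ?c' = prod_list (map (\<lambda>t. wval (yield t) ?c') ts)"
    by (simp add: wval_concat comp_def)
  also have "\<dots> = prod_list (map (\<lambda>t. lub (?val ` {t'. graft T t t'})) ts)"
    using Node.IH by (simp cong: map_cong)
  also have "\<dots> = lub ((\<lambda>ts'. prod_list (map ?val ts')) ` {ts'. list_all2 (graft T) ts ts'})"
    by (rule prod_list_lub) (simp add: countable_graft assms)
  also have "{ts'. list_all2 (graft T) ts ts'} = {ts'. graft T (Node y ts) (Node y ts')}"
    by (simp add: graft_Node_iff)
  also have "(\<lambda>ts'. prod_list (map ?val ts')) ` \<dots> = ?val ` {t'. graft T (Node y ts) t'}"
    by (force simp: graft_Node_iff wval_concat comp_def)
  finally show ?case .
qed

lemma peval_eq_lub: "finite g \<Longrightarrow> peval g c = lub ((\<lambda>m. wval m c :: 's) ` g)"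
  unfolding peval_def by (rule lub_eqI[symmetric]) (rule is_sup_sum)

lemma lin_completion_eq_lub:
  fixes f :: "'x::countable \<Rightarrow> ('s, 'x) poly"
  assumes fin: "\<And>x. finite (f x)"
    and branching: "\<And>y m. m \<in> f y \<Longrightarrow> 2 \<le> length m"
    and var: "\<And>y m. m \<in> f y \<Longrightarrow> \<exists>z. Vr z \<in> set m"
  shows "lin_completion f x c = lub ((\<lambda>t. wval (yield t) c) ` dtrees_le f 1 x)"
proof -
  let ?L = "{g. lin_sub f x g}" and ?w = "\<lambda>m. wval m c"
  have L: "countable ?L" by (rule countable_lin_sub[OF fin])
  have finite_L: "finite g" if "g \<in> ?L" for g using that lin_sub_finite[OF _ fin] by simp
  have "lin_completion f x c = lub ((\<lambda>g. peval g c) ` ?L)"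
    by (simp add: lin_completion_def ssum_eq_lub[OF L])
  also have "(\<lambda>g. peval g c) ` ?L = (\<lambda>g. lub (?w ` g)) ` ?L"
    by (rule image_cong[OF refl]) (simp add: finite_L peval_eq_lub)
  also have "lub \<dots> = lub (\<Union>g\<in>?L. ?w ` g)"
    by (rule lub_UN[symmetric, OF L]) (simp add: finite_L countable_finite)
  also have "(\<Union>g\<in>?L. ?w ` g) = ?w ` \<Union>?L" by auto
  also have "\<Union>?L = yield ` dtrees_le f 1 x" by (rule Union_lin_sub[OF branching var])
  finally show ?thesis by (simp add: image_image)
qed

lemma lub_dtrees_le_self_subst:
  assumes countable: "\<And>y. countable (dtrees_le f k y)"
    and M: "\<And>y c. M y c = lub ((\<lambda>t. wval (yield t) c :: 's) ` dtrees_le f k y)"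
  shows "M x (\<lambda>y. M y c) = lub ((\<lambda>t. wval (yield t) c) ` dtrees_le f (2 * k) x)"
proof -
  let ?G = "\<lambda>t. (\<lambda>t'. wval (yield t') c) ` {t'. graft (dtrees_le f k) t t'}"
  have "M x (\<lambda>y. M y c) = lub ((\<lambda>t. lub (?G t)) ` dtrees_le f k x)"
  proof -
    have "(\<lambda>y. M y c) = (\<lambda>y. lub ((\<lambda>s. wval (yield s) c) ` dtrees_le f k y))" using M by blast
    then show ?thesis using M wval_graft[OF countable] by simp
  qed
  also have "\<dots> = lub (\<Union>t\<in>dtrees_le f k x. ?G t)"
    by (rule lub_UN[symmetric]) (simp_all add: countable countable_graft)
  also have "(\<Union>t\<in>dtrees_le f k x. ?G t)
      = (\<lambda>t'. wval (yield t') c) ` {t'. \<exists>t\<in>dtrees_le f k x. graft (dtrees_le f k) t t'}"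
    by auto
  finally show ?thesis by (simp only: graft_dtrees_le)
qed

end

theorem theorem6:
  fixes f :: "'x::finite \<Rightarrow> ('s::{semiring_0,monoid_mult}, 'x) poly"
  assumes "omega_continuous TYPE('s)" and "idempotent_semiring TYPE('s)"
    and "\<And>x. finite (f x)"
    and "\<And>x m. m \<in> f x \<Longrightarrow> is_monomial m"
    and "\<And>x m. m \<in> f x \<Longrightarrow> \<exists>y. Vr y \<in> set m"
  shows "\<forall>n x. Mseq f n x = (\<lambda>c. ssum (\<lambda>t. wval (yield t) c) {t \<in> dtrees f x. dim t \<le> 2 ^ n})"
proof -
  note semiring = assms(1,2)
  have branching: "2 \<le> length m" if "m \<in> f y" for y m
    using assms(5)[OF that] is_monomial_length[OF assms(4)[OF that]] by (elim exE)
  have countable: "countable (dtrees_le f k y)" for k y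
    by (rule countable_subset[OF _ countable_dtrees[OF assms(3)]]) (auto simp: dtrees_le_def)
  have "Mseq f n x c = lub ((\<lambda>t. wval (yield t) c) ` dtrees_le f (2 ^ n) x)" for n x c
  proof (induction n arbitrary: x c)
    case 0
    show ?case using lin_completion_eq_lub[OF semiring assms(3) branching assms(5)] by simp
  next
    case (Suc n)
    show ?case using lub_dtrees_le_self_subst[OF semiring countable Suc.IH] by simp
  qed
  then show ?thesis
    by (auto simp: ssum_eq_lub[OF semiring countable] dtrees_le_def[symmetric])
qed

end
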